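(* Consider the $N$ iOFP systems with exosystem-generated disturbances described in the context, over a connected undirected graph with $E$ edges and incidence matrix $B=[b_{ig}]\in\mathbb R^{N\times E}$. Let $R=\mathrm{diag}(R_1,\dots,R_N)$, $m=\sum_i m_i$, $H=(B^+\otimes I_q)R\in\mathbb R^{Eq\times m}$ and let $H_g\in\mathbb R^{q\times m}$ be its $g$-th block row, so $H=[H_1;\dots;H_E]$. Let $s(w):=[s_1(w_1);\dots;s_N(w_N)]$ for $w=[w_1;\dots;w_N]\in\mathbb R^m$. For each edge $g=1,\dots,E$ set $\varrho_g=\sum_{j}b_{jg}y_j$ and use the controller $$\dot\zeta_g=s(\zeta_g)+H_g^\top\varrho_g,\qquad \dot\kappa_g=\delta_g\varrho_g^\top\varrho_g,\qquad v_g=H_g\zeta_g+\kappa_g\varrho_g,$$ with $\zeta_g\in\mathbb R^m$, $\kappa_g\in\mathbb R$, arbitrary gains $\delta_g>0$ and arbitrary initial conditions, and set the inputs $u_i=-\sum_{g=1}^E b_{ig}v_g$, $i=1,\dots,N$. If the closed-loop solution $(x,\zeta,\kappa)$ is bounded on $[0,\infty)$, then $\lim_{t\to\infty}\|y_i(t)-\bar y(t)\|=0$ for all $i$, where $\bar y=\frac1N\sum_j y_j$.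
   Context: Each system $\dot x_i=f(x_i,u_i,d_i)$, $y_i=h(x_i)$ has $x_i\in\mathbb R^n$, $u_i,y_i,d_i\in\mathbb R^q$; $f$ locally Lipschitz, $h$ continuously differentiable. iOFP with constant $\sigma\in\mathbb R$: there exist $\Phi:\mathbb R^n\times\mathbb R^n\to\mathbb R_{\ge0}$ (continuously differentiable) and class-$\mathcal K_\infty$ functions $\underline\alpha,\overline\alpha$ with $\underline\alpha(\|x_i-x_i'\|)\le\Phi(x_i,x_i')\le\overline\alpha(\|x_i-x_i'\|)$ and $\frac{\partial\Phi}{\partial x_i}(x_i,x_i')f(x_i,u_i,d_i)+\frac{\partial\Phi}{\partial x_i'}(x_i,x_i')f(x_i',u_i',d_i')\le\sigma\|y_i-y_i'\|^2+(y_i-y_i')^\top\big((u_i+d_i)-(u_i'+d_i')\big)$ for all arguments. Exosystems: $\dot w_i=s_i(w_i)$, $d_i=R_iw_i$, $w_i\in\mathbb R^{m_i}$, $s_i$ locally Lipschitz, $s_i(0)=0$, $(w_i-w_i')^\top(s_i(w_i)-s_i(w_i'))\le0$ for all $w_i,w_i'$. Graph: symmetric nonnegative adjacency $A=[a_{ij}]$, connected. Incidence matrix: for the $g$-th edge $(i,j)$ (each undirected edge taken once with an orientation), $b_{ig}=-\sqrt{a_{ij}}$, $b_{jg}=\sqrt{a_{ij}}$, and $b_{kg}=0$ otherwise; thus $L=BB^\top$ is the Laplacian. $B^+$ is the Moore–Penrose pseudoinverse, $\otimes$ the Kronecker product. *)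

theory Defs
  imports "HOL-Analysis.Analysis"
begin

definition class_K_inf :: "(real \<Rightarrow> real) \<Rightarrow> bool" where
  "class_K_inf \<alpha> \<longleftrightarrow> continuous_on {0..} \<alpha> \<and> \<alpha> 0 = 0 \<and> strict_mono_on {0..} \<alpha>
      \<and> filterlim \<alpha> at_top at_top"

definition loc_lipschitz :: "('a::metric_space \<Rightarrow> 'b::metric_space) \<Rightarrow> bool" where
  "loc_lipschitz F \<longleftrightarrow> (\<forall>z. \<exists>e>0. \<exists>L. \<forall>a\<in>cball z e. \<forall>b\<in>cball z e. dist (F a) (F b) \<le> L * dist a b)"

definition is_MP_pinv :: "real^'c^'r \<Rightarrow> real^'r^'c \<Rightarrow> bool" where
  "is_MP_pinv M P \<longleftrightarrow> M ** P ** M = M \<and> P ** M ** P = P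
      \<and> transpose (M ** P) = M ** P \<and> transpose (P ** M) = P ** M"

definition connected_adj :: "real^'v^'v \<Rightarrow> bool" where
  "connected_adj A \<longleftrightarrow> (\<forall>i j. (i, j) \<in> {(a, b). A$a$b > 0}\<^sup>*)"

(* ends: each edge index g is an undirected edge {i,j} (i ~= j, a_ij > 0) with a chosen
   orientation (i,j); every such undirected edge appears exactly once *)
definition edge_enumeration :: "real^'v^'v \<Rightarrow> ('e \<Rightarrow> 'v \<times> 'v) \<Rightarrow> bool" where
  "edge_enumeration A ends \<longleftrightarrow>
     (\<forall>g. fst (ends g) \<noteq> snd (ends g) \<and> A $ fst (ends g) $ snd (ends g) > 0) \<and>
     (\<forall>g g'. {fst (ends g), snd (ends g)} = {fst (ends g'), snd (ends g')} \<longrightarrow> g = g') \<and>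
     (\<forall>i j. i \<noteq> j \<and> A$i$j > 0 \<longrightarrow> (\<exists>g. {fst (ends g), snd (ends g)} = {i, j}))"

definition incidence_matrix :: "real^'v^'v \<Rightarrow> ('e \<Rightarrow> 'v \<times> 'v) \<Rightarrow> real^'e^'v" where
  "incidence_matrix A ends = (\<chi> k g. let (i, j) = ends g in
       if k = i then - sqrt (A$i$j) else if k = j then sqrt (A$i$j) else 0)"

(* exosystem coordinates: the stacked exostate w \<in> R^m has coordinate type 'm;
   blk k is the agent to which coordinate k belongs, so R^{m_i} is the subspace of
   vectors supported on {k. blk k = i} *)
definition in_block :: "('m \<Rightarrow> 'v) \<Rightarrow> 'v \<Rightarrow> real^'m \<Rightarrow> bool" where
  "in_block blk i w \<longleftrightarrow> (\<forall>k. blk k \<noteq> i \<longrightarrow> w$k = 0)"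

definition block_proj :: "('m \<Rightarrow> 'v) \<Rightarrow> 'v \<Rightarrow> real^'m \<Rightarrow> real^'m" where
  "block_proj blk i w = (\<chi> k. if blk k = i then w$k else 0)"

definition block_proj_mat :: "('m \<Rightarrow> 'v) \<Rightarrow> 'v \<Rightarrow> real^'m^'m" where
  "block_proj_mat blk i = (\<chi> k l. if k = l \<and> blk k = i then 1 else 0)"

(* s(w) = [s_1(w_1); ...; s_N(w_N)] *)
definition stack_s :: "('m \<Rightarrow> 'v::finite) \<Rightarrow> ('v \<Rightarrow> real^'m \<Rightarrow> real^'m) \<Rightarrow> real^'m \<Rightarrow> real^'m" where
  "stack_s blk sl w = (\<Sum>i\<in>UNIV. sl i (block_proj blk i w))"

(* g-th block row of H = (B^+ \<otimes> I_q) diag(R_1,...,R_N) *)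
definition H_row :: "real^'v^'e \<Rightarrow> ('v::finite \<Rightarrow> real^'m^'q) \<Rightarrow> ('m \<Rightarrow> 'v) \<Rightarrow> 'e \<Rightarrow> real^'m^'q" where
  "H_row Bp Rm blk g = (\<Sum>j\<in>UNIV. (Bp$g$j) *\<^sub>R (Rm j ** block_proj_mat blk j))"

end

theory Submission
  imports Defs
begin

text \<open>The adaptive gain obeys \<open>\<kappa>\<^sub>g' = \<delta>\<^sub>g \<parallel>\<rho>\<^sub>g\<parallel>\<^sup>2\<close>, so it is
  nondecreasing, and it is bounded by assumption; hence \<open>\<parallel>\<rho>\<^sub>g\<parallel>\<^sup>2\<close> is integrable on \<open>[0, \<infinity>)\<close>.
  The exostates do not grow because the \<open>s\<^sub>i\<close> are monotone with \<open>s\<^sub>i(0) = 0\<close>, so the whole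
  closed-loop state stays in a compact set, on which \<open>\<rho>\<^sub>g'\<close> is a continuous function of the state
  and therefore bounded. Thus \<open>\<rho>\<^sub>g\<close> is Lipschitz and Barbalat's lemma gives \<open>\<rho>\<^sub>g \<rightarrow> 0\<close>.
  For a connected graph \<open>B B\<^sup>+ = I - \<one>\<one>\<^sup>T/N\<close> (the projection onto the complement of the
  constant vectors), so the deviation of \<open>y\<^sub>i\<close> from the average is \<open>\<Sum>\<^sub>g (B\<^sup>+)\<^sub>g\<^sub>i \<rho>\<^sub>g \<rightarrow> 0\<close>.\<close>

lemma DERIV_within_nonneg_imp_increasing:
  fixes \<phi> D :: "real \<Rightarrow> real"
  assumes "a \<le> b" "{a..b} \<subseteq> T"
    and der: "\<And>\<tau>. \<tau> \<in> {a..b} \<Longrightarrow> (\<phi> has_real_derivative D \<tau>) (at \<tau> within T)"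
    and nonneg: "\<And>\<tau>. \<tau> \<in> {a..b} \<Longrightarrow> D \<tau> \<ge> 0"
  shows "\<phi> a \<le> \<phi> b"
proof (rule DERIV_nonneg_imp_increasing_open[OF \<open>a \<le> b\<close>])
  show "continuous_on {a..b} \<phi>"
    unfolding continuous_on_eq_continuous_within
    using der assms(2) by (meson DERIV_continuous continuous_within_subset)
  fix \<tau> assume "a < \<tau>" "\<tau> < b"
  then have "\<tau> \<in> interior T"
    using interior_mono[OF assms(2)] by auto
  then have "at \<tau> within T = at \<tau>"
    by (rule at_within_interior)
  then show "\<exists>y. (\<phi> has_real_derivative y) (at \<tau>) \<and> 0 \<le> y"
    using der[of \<tau>] nonneg[of \<tau>] \<open>a < \<tau>\<close> \<open>\<tau> < b\<close> by auto
qed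

lemma norm_nonincreasing_if_dissipative:
  fixes w :: "real \<Rightarrow> 'a::real_inner"
  assumes der: "\<And>t. t \<ge> 0 \<Longrightarrow> (w has_vector_derivative w' t) (at t within {0..})"
    and dissipative: "\<And>t. t \<ge> 0 \<Longrightarrow> w t \<bullet> w' t \<le> 0"
    and "t \<ge> 0"
  shows "norm (w t) \<le> norm (w 0)"
proof -
  have "- (w 0 \<bullet> w 0) \<le> - (w t \<bullet> w t)"
  proof (rule DERIV_within_nonneg_imp_increasing[where \<phi> = "\<lambda>\<tau>. - (w \<tau> \<bullet> w \<tau>)"
                                              and D = "\<lambda>\<tau>. - (2 * (w \<tau> \<bullet> w' \<tau>))"])
    fix \<tau> assume "\<tau> \<in> {0..t}"
    then have "(w has_derivative (\<lambda>s. s *\<^sub>R w' \<tau>)) (at \<tau> within {0..})"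
      using der[of \<tau>] by (simp add: has_vector_derivative_def)
    from has_derivative_inner[OF this this]
    have "((\<lambda>\<tau>. w \<tau> \<bullet> w \<tau>) has_real_derivative 2 * (w \<tau> \<bullet> w' \<tau>)) (at \<tau> within {0..})"
      unfolding has_field_derivative_def
      by (rule has_derivative_eq_rhs) (simp add: fun_eq_iff inner_commute algebra_simps)
    then show "((\<lambda>\<tau>. - (w \<tau> \<bullet> w \<tau>)) has_real_derivative - (2 * (w \<tau> \<bullet> w' \<tau>))) (at \<tau> within {0..})"
      by (rule DERIV_minus)
  qed (use assms in auto)
  then show ?thesis by (simp add: norm_le)
qed

lemma bounded_continuous_comp:
  fixes F :: "'a::heine_borel \<Rightarrow> 'b::metric_space"
  assumes "continuous_on UNIV F" "bounded (a ` S)"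
  shows "bounded ((\<lambda>t. F (a t)) ` S)"
proof -
  have "compact (F ` closure (a ` S))"
    using assms by (intro compact_continuous_image continuous_on_subset[OF assms(1)]) auto
  moreover have "(\<lambda>t. F (a t)) ` S \<subseteq> F ` closure (a ` S)"
    using closure_subset by fastforce
  ultimately show ?thesis
    using compact_imp_bounded bounded_subset by blast
qed

lemma continuous_on_matrix_vector_mult [continuous_intros]:
  fixes M :: "'a::topological_space \<Rightarrow> real^'c::finite^'r::finite"
  assumes "continuous_on S M" "continuous_on S v"
  shows "continuous_on S (\<lambda>s. M s *v v s)"
  unfolding matrix_vector_mult_def using assms by (intro continuous_intros)

lemma continuous_on_compose_case_prod3:
  assumes "continuous_on UNIV (\<lambda>(a, b, c). F a b c)"
    and "continuous_on S p" "continuous_on S q" "continuous_on S r"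
  shows "continuous_on S (\<lambda>s. F (p s) (q s) (r s))"
  using continuous_on_compose2[OF assms(1) continuous_on_Pair[OF assms(2) continuous_on_Pair[OF assms(3,4)]]]
  by simp

lemma loc_lipschitz_imp_continuous_on:
  assumes "loc_lipschitz F"
  shows "continuous_on UNIV F"
proof -
  have "isCont F z" for z
  proof -
    obtain e L where e: "e > 0"
      and L: "\<forall>a\<in>cball z e. \<forall>b\<in>cball z e. dist (F a) (F b) \<le> L * dist a b"
      using assms unfolding loc_lipschitz_def by blast
    have "(max L 0)-lipschitz_on (cball z e) F"
      unfolding lipschitz_on_def using L
      by (auto intro: order_trans[OF _ mult_right_mono[OF max.cobounded1]])
    then have "continuous_on (ball z e) F"
      using lipschitz_on_continuous_on continuous_on_subset ball_subset_cball by blast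
    then show ?thesis
      using e by (simp add: continuous_on_eq_continuous_at)
  qed
  then show ?thesis by (simp add: continuous_at_imp_continuous_on)
qed

lemma barbalat_lipschitz:
  fixes k :: "real \<Rightarrow> real" and r :: "real \<Rightarrow> 'a::real_normed_vector"
  assumes der: "\<And>t. t \<ge> 0 \<Longrightarrow> (k has_real_derivative c * (norm (r t))\<^sup>2) (at t within {0..})"
    and "c > 0"
    and k_bdd: "bdd_above (k ` {0..})"
    and lip: "L-lipschitz_on {0..} r"
  shows "(r \<longlongrightarrow> 0) at_top"
proof (rule ccontr)
  assume "\<not> (r \<longlongrightarrow> 0) at_top"
  then obtain \<epsilon> where "\<epsilon> > 0" and big: "\<And>N. \<exists>t\<ge>N. norm (r t) \<ge> \<epsilon>"
    unfolding tendsto_iff eventually_at_top_linorder by (force simp: not_less)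
  define d where "d = \<epsilon> / (2 * (L + 1))"
  have "L \<ge> 0" using lip by (rule lipschitz_on_nonneg)
  then have "d > 0" using \<open>\<epsilon> > 0\<close> by (simp add: d_def)
  define gain where "gain = c * (\<epsilon>/2)\<^sup>2 * d"
  have "gain > 0" using \<open>c > 0\<close> \<open>\<epsilon> > 0\<close> \<open>d > 0\<close> by (simp add: gain_def)
  \<comment> \<open>\<open>k\<close> comes within \<open>gain\<close> of its supremum, but after any time where \<open>\<parallel>r\<parallel> \<ge> \<epsilon>\<close> it stays
    \<open>\<ge> \<epsilon>/2\<close> for a time \<open>d\<close>, during which \<open>k\<close> increases by \<open>gain\<close>\<close>
  define S where "S = Sup (k ` {0..})"
  obtain T where "T \<ge> 0" "k T > S - gain"
    using less_cSup_iff[OF _ k_bdd, of "S - gain"] \<open>gain > 0\<close> unfolding S_def by auto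
  obtain t where "t \<ge> T" "norm (r t) \<ge> \<epsilon>" using big by blast
  with \<open>T \<ge> 0\<close> have "t \<ge> 0" by simp
  have k_mono: "k T \<le> k t"
    by (rule DERIV_within_nonneg_imp_increasing[where \<phi> = k and T = "{0..}"
          and D = "\<lambda>\<tau>. c * (norm (r \<tau>))\<^sup>2"])
      (use \<open>T \<ge> 0\<close> \<open>t \<ge> T\<close> \<open>c > 0\<close> der in auto)
  have r_large: "norm (r \<tau>) \<ge> \<epsilon>/2" if "\<tau> \<in> {t..t+d}" for \<tau>
  proof -
    have "norm (r \<tau> - r t) \<le> L * \<bar>\<tau> - t\<bar>"
      using lipschitz_onD[OF lip, of \<tau> t] that \<open>t \<ge> 0\<close> by (simp add: dist_norm)
    also have "\<dots> \<le> (L + 1) * d" using that \<open>L \<ge> 0\<close> by (intro mult_mono) auto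
    also have "\<dots> = \<epsilon>/2" using \<open>L \<ge> 0\<close> by (simp add: d_def field_simps)
    finally show ?thesis using \<open>norm (r t) \<ge> \<epsilon>\<close> norm_triangle_ineq2[of "r t" "r \<tau>"]
      by (simp add: norm_minus_commute)
  qed
  have "k t - c * (\<epsilon>/2)\<^sup>2 * t \<le> k (t + d) - c * (\<epsilon>/2)\<^sup>2 * (t + d)"
  proof (rule DERIV_within_nonneg_imp_increasing[where T = "{0..}" and \<phi> = "\<lambda>\<tau>. k \<tau> - c * (\<epsilon>/2)\<^sup>2 * \<tau>"
                  and D = "\<lambda>\<tau>. c * (norm (r \<tau>))\<^sup>2 - c * (\<epsilon>/2)\<^sup>2"])
    fix \<tau> assume \<tau>: "\<tau> \<in> {t..t+d}"
    then show "((\<lambda>\<tau>. k \<tau> - c * (\<epsilon>/2)\<^sup>2 * \<tau>) has_real_derivative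
        c * (norm (r \<tau>))\<^sup>2 - c * (\<epsilon>/2)\<^sup>2) (at \<tau> within {0..})"
      using \<open>t \<ge> 0\<close> by (auto intro!: derivative_eq_intros der)
    have "(\<epsilon>/2)\<^sup>2 \<le> (norm (r \<tau>))\<^sup>2" using r_large[OF \<tau>] \<open>\<epsilon> > 0\<close> by (intro power_mono) auto
    then show "c * (norm (r \<tau>))\<^sup>2 - c * (\<epsilon>/2)\<^sup>2 \<ge> 0" using \<open>c > 0\<close> by simp
  qed (use \<open>t \<ge> 0\<close> \<open>d > 0\<close> in auto)
  then have "k (t + d) \<ge> k t + gain" by (simp add: gain_def algebra_simps)
  moreover have "k (t + d) \<le> S"
    unfolding S_def by (rule cSup_upper) (use k_bdd \<open>t \<ge> 0\<close> \<open>d > 0\<close> in auto)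
  ultimately show False using k_mono \<open>k T > S - gain\<close> by linarith
qed

lemma bounded_vector_derivative_imp_lipschitz:
  fixes r :: "real \<Rightarrow> 'a::real_normed_vector"
  assumes "convex S"
    and der: "\<And>t. t \<in> S \<Longrightarrow> (r has_vector_derivative r' t) (at t within S)"
    and bound: "\<And>t. t \<in> S \<Longrightarrow> norm (r' t) \<le> C"
    and "C \<ge> 0"
  shows "C-lipschitz_on S r"
proof (rule bounded_derivative_imp_lipschitz[where f' = "\<lambda>t s. s *\<^sub>R r' t"])
  fix t assume "t \<in> S"
  then show "(r has_derivative (\<lambda>s. s *\<^sub>R r' t)) (at t within S)"
    using der has_vector_derivative_def by blast
  have "onorm (\<lambda>s::real. s *\<^sub>R r' t) = norm (r' t)"
    by (simp add: onorm_scaleR_left[OF bounded_linear_ident] onorm_id)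
  then show "onorm (\<lambda>s::real. s *\<^sub>R r' t) \<le> C" using bound \<open>t \<in> S\<close> by simp
qed fact+

corollary barbalat_bounded_derivative:
  fixes k :: "real \<Rightarrow> real" and r :: "real \<Rightarrow> 'a::real_normed_vector"
  assumes "\<And>t. t \<ge> 0 \<Longrightarrow> (k has_real_derivative c * (norm (r t))\<^sup>2) (at t within {0..})"
    and "c > 0" "bdd_above (k ` {0..})"
    and "\<And>t. t \<ge> 0 \<Longrightarrow> (r has_vector_derivative r' t) (at t within {0..})"
    and "bounded (r' ` {0..})"
  shows "(r \<longlongrightarrow> 0) at_top"
proof -
  obtain C where "C > 0" "\<And>t. t \<ge> 0 \<Longrightarrow> norm (r' t) \<le> C"
    using \<open>bounded (r' ` {0..})\<close> unfolding bounded_pos by auto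
  then have "C-lipschitz_on {0..} r"
    using assms(4) by (intro bounded_vector_derivative_imp_lipschitz) auto
  with assms(1-3) show ?thesis by (rule barbalat_lipschitz)
qed

lemma incidence_matrix_nth:
  "incidence_matrix A ends $ k $ g =
     (if k = fst (ends g) then - sqrt (A $ fst (ends g) $ snd (ends g))
      else if k = snd (ends g) then sqrt (A $ fst (ends g) $ snd (ends g)) else 0)"
  unfolding incidence_matrix_def by (simp add: case_prod_beta)

lemma incidence_matrix_weighted_column_sum:
  fixes A :: "real^'v::finite^'v" and ends :: "'e::finite \<Rightarrow> 'v \<times> 'v"
  assumes "edge_enumeration A ends"
  shows "(\<Sum>k\<in>UNIV. incidence_matrix A ends $ k $ g * z k)
           = sqrt (A $ fst (ends g) $ snd (ends g)) * (z (snd (ends g)) - z (fst (ends g)))"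
proof -
  let ?i = "fst (ends g)" and ?j = "snd (ends g)" and ?a = "sqrt (A $ fst (ends g) $ snd (ends g))"
  have "?i \<noteq> ?j" using assms unfolding edge_enumeration_def by blast
  then have "(\<Sum>k\<in>UNIV. incidence_matrix A ends $ k $ g * z k)
      = (\<Sum>k\<in>UNIV. (if k = ?i then - ?a * z ?i else 0) + (if k = ?j then ?a * z ?j else 0))"
    by (intro sum.cong) (auto simp: incidence_matrix_nth)
  also have "\<dots> = ?a * (z ?j - z ?i)" by (simp add: sum.distrib algebra_simps)
  finally show ?thesis .
qed

lemma incidence_matrix_column_sum:
  fixes A :: "real^'v::finite^'v" and ends :: "'e::finite \<Rightarrow> 'v \<times> 'v"
  assumes "edge_enumeration A ends"
  shows "(\<Sum>k\<in>UNIV. incidence_matrix A ends $ k $ g) = 0"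
  using incidence_matrix_weighted_column_sum[OF assms, of g "\<lambda>_. 1"] by simp

lemma incidence_matrix_left_kernel_const:
  fixes A :: "real^'v::finite^'v" and ends :: "'e::finite \<Rightarrow> 'v \<times> 'v" and z :: "'v \<Rightarrow> real"
  assumes edges: "edge_enumeration A ends" and conn: "connected_adj A"
    and kernel: "\<And>g. (\<Sum>k\<in>UNIV. incidence_matrix A ends $ k $ g * z k) = 0"
  shows "z a = z b"
proof -
  have along_edge: "z (fst (ends g)) = z (snd (ends g))" for g
  proof -
    have "A $ fst (ends g) $ snd (ends g) > 0" using edges unfolding edge_enumeration_def by blast
    then show ?thesis
      using kernel[of g] incidence_matrix_weighted_column_sum[OF edges, of g z] by simp
  qed
  have adjacent: "z p = z q" if "A $ p $ q > 0" for p q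
  proof (cases "p = q")
    case False
    have "\<forall>i j. i \<noteq> j \<and> A$i$j > 0 \<longrightarrow> (\<exists>g. {fst (ends g), snd (ends g)} = {i, j})"
      using edges unfolding edge_enumeration_def by (elim conjE)
    then obtain g where "{fst (ends g), snd (ends g)} = {p, q}"
      using False \<open>A $ p $ q > 0\<close> by blast
    then show ?thesis using along_edge[of g] by (auto simp: doubleton_eq_iff)
  qed simp
  have "(a, b) \<in> {(p, q). A $ p $ q > 0}\<^sup>*" using conn unfolding connected_adj_def by blast
  then show ?thesis
  proof (induction rule: rtrancl_induct)
    case (step y w) then show ?case using adjacent[of y w] by simp
  qed simp
qed

lemma incidence_matrix_mult_pinv:
  fixes A :: "real^'v::finite^'v" and ends :: "'e::finite \<Rightarrow> 'v \<times> 'v" and Bp :: "real^'v^'e"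
  assumes edges: "edge_enumeration A ends" and conn: "connected_adj A"
    and pinv: "is_MP_pinv (incidence_matrix A ends) Bp"
  shows "(incidence_matrix A ends ** Bp) $ k $ i = (if k = i then 1 else 0) - 1 / real CARD('v)"
proof -
  define B where "B = incidence_matrix A ends"
  define P where "P = B ** Bp"
  have "transpose P = P" "P ** B = B"
    using pinv unfolding is_MP_pinv_def P_def B_def by auto
  then have "transpose B ** P = transpose B"
    by (metis matrix_transpose_mul transpose_transpose)
  then have "(transpose B ** P) $ g $ i = transpose B $ g $ i" for g
    by simp
  then have BtP: "(\<Sum>k\<in>UNIV. B $ k $ g * P $ k $ i) = B $ i $ g" for g
    by (simp add: matrix_matrix_mult_def transpose_def)
  have column_sum: "(\<Sum>k\<in>UNIV. P $ k $ i) = 0"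
  proof -
    have "(\<Sum>k\<in>UNIV. P $ k $ i) = (\<Sum>k\<in>UNIV. \<Sum>g\<in>UNIV. B $ k $ g * Bp $ g $ i)"
      by (simp add: P_def matrix_matrix_mult_def)
    also have "\<dots> = (\<Sum>g\<in>UNIV. (\<Sum>k\<in>UNIV. B $ k $ g) * Bp $ g $ i)"
      by (subst sum.swap) (simp add: sum_distrib_right)
    also have "\<dots> = 0" using incidence_matrix_column_sum[OF edges] by (simp add: B_def)
    finally show ?thesis .
  qed
  define z where "z k = (if k = i then 1 else 0) - P $ k $ i" for k
  have "(\<Sum>k\<in>UNIV. B $ k $ g * z k) = 0" for g
    using BtP[of g]
    by (simp add: z_def algebra_simps sum_subtractf if_distrib[where f="\<lambda>x. B$_$g * x"] cong: if_cong)
  then have const: "z k = z i" for k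
    using incidence_matrix_left_kernel_const[OF edges conn] unfolding B_def by blast
  have "(\<Sum>k\<in>UNIV. z k) = 1" using column_sum by (simp add: z_def sum_subtractf)
  moreover have "(\<Sum>k\<in>UNIV. z k) = (\<Sum>k\<in>(UNIV :: 'v set). z i)"
    by (rule sum.cong) (use const in auto)
  ultimately have "real CARD('v) * z i = 1" by simp
  then have "z i = 1 / real CARD('v)" by (simp add: field_simps)
  then show ?thesis using const[of k] unfolding z_def P_def B_def by simp
qed

lemma deviation_from_mean_eq_pinv_incidence:
  fixes A :: "real^'v::finite^'v" and ends :: "'e::finite \<Rightarrow> 'v \<times> 'v" and Bp :: "real^'v^'e"
    and y :: "'v \<Rightarrow> 'a::real_vector"
  assumes "edge_enumeration A ends" "connected_adj A" "is_MP_pinv (incidence_matrix A ends) Bp"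
  shows "y i - (1 / real CARD('v)) *\<^sub>R (\<Sum>j\<in>UNIV. y j)
           = (\<Sum>g\<in>UNIV. Bp $ g $ i *\<^sub>R (\<Sum>j\<in>UNIV. incidence_matrix A ends $ j $ g *\<^sub>R y j))"
proof -
  have "(\<Sum>g\<in>UNIV. Bp $ g $ i *\<^sub>R (\<Sum>j\<in>UNIV. incidence_matrix A ends $ j $ g *\<^sub>R y j))
      = (\<Sum>g\<in>UNIV. \<Sum>j\<in>UNIV. (incidence_matrix A ends $ j $ g * Bp $ g $ i) *\<^sub>R y j)"
    by (simp add: scaleR_sum_right mult.commute)
  also have "\<dots> = (\<Sum>j\<in>UNIV. (incidence_matrix A ends ** Bp) $ j $ i *\<^sub>R y j)"
    unfolding matrix_matrix_mult_def by (subst sum.swap) (simp add: scaleR_sum_left)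
  also have "\<dots> = (\<Sum>j\<in>UNIV. ((if j = i then 1 else 0) - 1 / real CARD('v)) *\<^sub>R y j)"
    by (simp add: incidence_matrix_mult_pinv[OF assms])
  also have "\<dots> = y i - (1 / real CARD('v)) *\<^sub>R (\<Sum>j\<in>UNIV. y j)"
    by (simp add: scaleR_diff_left sum_subtractf scaleR_sum_right if_distrib[where f="\<lambda>c. c *\<^sub>R _"]
        cong: if_cong)
  finally show ?thesis by simp
qed

lemma consensus_if_relative_outputs_tendsto_zero:
  fixes A :: "real^'v::finite^'v" and ends :: "'e::finite \<Rightarrow> 'v \<times> 'v" and Bp :: "real^'v^'e"
    and y :: "'t \<Rightarrow> 'v \<Rightarrow> 'a::real_normed_vector"
  assumes "edge_enumeration A ends" "connected_adj A" "is_MP_pinv (incidence_matrix A ends) Bp"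
    and relative: "\<And>g. ((\<lambda>t. \<Sum>j\<in>UNIV. incidence_matrix A ends $ j $ g *\<^sub>R y t j) \<longlongrightarrow> 0) F"
  shows "((\<lambda>t. norm (y t i - (1 / real CARD('v)) *\<^sub>R (\<Sum>j\<in>UNIV. y t j))) \<longlongrightarrow> 0) F"
proof -
  have "((\<lambda>t. \<Sum>g\<in>UNIV. Bp $ g $ i *\<^sub>R (\<Sum>j\<in>UNIV. incidence_matrix A ends $ j $ g *\<^sub>R y t j)) \<longlongrightarrow> 0) F"
    by (intro tendsto_null_sum) (use tendsto_scaleR[OF tendsto_const relative] in simp)
  then show ?thesis
    by (simp add: deviation_from_mean_eq_pinv_incidence[OF assms(1-3)] tendsto_norm_zero)
qed

lemma exosystem_state_bounded:
  fixes blk :: "'m::finite \<Rightarrow> 'v::finite" and sl :: "'v \<Rightarrow> real^'m \<Rightarrow> real^'m"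
    and w :: "'v \<Rightarrow> real \<Rightarrow> real^'m"
  assumes s_zero: "\<forall>i. sl i 0 = 0"
    and s_mono: "\<forall>i w0 w0'. in_block blk i w0 \<and> in_block blk i w0' \<longrightarrow>
                    (w0 - w0') \<bullet> (sl i w0 - sl i w0') \<le> 0"
    and w_block: "\<forall>i t. t \<ge> 0 \<longrightarrow> in_block blk i (w i t)"
    and w_ode: "\<forall>i t. t \<ge> 0 \<longrightarrow> (w i has_vector_derivative sl i (w i t)) (at t within {0..})"
  shows "bounded ((\<lambda>t. \<chi> i. w i t) ` {0..})"
proof -
  have "norm (w i t) \<le> norm (w i 0)" if "t \<ge> 0" for i t
  proof (rule norm_nonincreasing_if_dissipative[where w' = "\<lambda>t. sl i (w i t)"])
    fix \<tau> :: real assume "\<tau> \<ge> 0"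
    then have "in_block blk i (w i \<tau>)" using w_block by blast
    moreover have "in_block blk i 0" by (simp add: in_block_def)
    ultimately have "(w i \<tau> - 0) \<bullet> (sl i (w i \<tau>) - sl i 0) \<le> 0"
      using s_mono by blast
    then show "w i \<tau> \<bullet> sl i (w i \<tau>) \<le> 0" using s_zero by simp
  qed (use w_ode that in auto)
  then have "norm (\<chi> i. w i t) \<le> norm (\<chi> i. w i 0)" if "t \<ge> 0" for t
    unfolding norm_vec_def using that by (auto intro: L2_set_mono)
  then show ?thesis unfolding bounded_iff by blast
qed

theorem theorem2:
  fixes f :: "real^'n \<Rightarrow> real^'q \<Rightarrow> real^'q \<Rightarrow> real^'n"
    and h :: "real^'n \<Rightarrow> real^'q"
    and \<sigma> :: real
    and \<Phi> :: "(real^'n) \<times> (real^'n) \<Rightarrow> real"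
    and grad\<Phi> :: "(real^'n) \<times> (real^'n) \<Rightarrow> (real^'n) \<times> (real^'n)"
    and \<alpha>l \<alpha>u :: "real \<Rightarrow> real"
    and blk :: "'m::finite \<Rightarrow> 'v::finite"
    and sl :: "'v \<Rightarrow> real^'m \<Rightarrow> real^'m"
    and Rm :: "'v \<Rightarrow> real^'m^'q"
    and A :: "real^'v^'v"
    and ends :: "'e::finite \<Rightarrow> 'v \<times> 'v"
    and B :: "real^'e^'v"
    and Bp :: "real^'v^'e"
    and \<delta> :: "'e \<Rightarrow> real"
    and x :: "real \<Rightarrow> real^'n^'v"
    and w :: "'v \<Rightarrow> real \<Rightarrow> real^'m"
    and \<zeta> :: "real \<Rightarrow> real^'m^'e"
    and \<kappa> :: "real \<Rightarrow> real^'e"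
  assumes f_lip: "loc_lipschitz (\<lambda>(z, u, d). f z u d)"
    and h_C1: "\<exists>Dh :: real^'n \<Rightarrow> real^'n^'q. (\<forall>z. (h has_derivative (\<lambda>v. Dh z *v v)) (at z))
                  \<and> continuous_on UNIV Dh"
    and \<Phi>_C1: "\<forall>z. (\<Phi> has_derivative (\<lambda>v. grad\<Phi> z \<bullet> v)) (at z)" "continuous_on UNIV grad\<Phi>"
    and \<alpha>_K: "class_K_inf \<alpha>l" "class_K_inf \<alpha>u"
    and \<Phi>_bounds: "\<forall>z z'. \<alpha>l (norm (z - z')) \<le> \<Phi> (z, z') \<and> \<Phi> (z, z') \<le> \<alpha>u (norm (z - z'))"
    and iOFP: "\<forall>z z' u u' d d'.
        grad\<Phi> (z, z') \<bullet> (f z u d, 0) + grad\<Phi> (z, z') \<bullet> (0, f z' u' d')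
          \<le> \<sigma> * (norm (h z - h z'))\<^sup>2 + (h z - h z') \<bullet> ((u + d) - (u' + d'))"
    and s_maps: "\<forall>i w0. in_block blk i w0 \<longrightarrow> in_block blk i (sl i w0)"
    and s_lip: "\<forall>i. loc_lipschitz (\<lambda>w0. sl i (block_proj blk i w0))"
    and s_zero: "\<forall>i. sl i 0 = 0"
    and s_mono: "\<forall>i w0 w0'. in_block blk i w0 \<and> in_block blk i w0' \<longrightarrow>
                    (w0 - w0') \<bullet> (sl i w0 - sl i w0') \<le> 0"
    and A_sym: "transpose A = A"
    and A_nonneg: "\<forall>i j. A$i$j \<ge> 0"
    and A_conn: "connected_adj A"
    and edges: "edge_enumeration A ends"
    and B_def: "B = incidence_matrix A ends"
    and Bp_def: "is_MP_pinv B Bp"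
    and \<delta>_pos: "\<forall>g. \<delta> g > 0"
    and w_block: "\<forall>i t. t \<ge> 0 \<longrightarrow> in_block blk i (w i t)"
    and w_ode: "\<forall>i t. t \<ge> 0 \<longrightarrow> (w i has_vector_derivative sl i (w i t)) (at t within {0..})"
    and x_ode: "\<forall>i t. t \<ge> 0 \<longrightarrow>
        ((\<lambda>\<tau>. x \<tau> $ i) has_vector_derivative
          f (x t $ i)
            (- (\<Sum>g\<in>UNIV. B$i$g *\<^sub>R
                 (H_row Bp Rm blk g *v \<zeta> t $ g
                  + \<kappa> t $ g *\<^sub>R (\<Sum>j\<in>UNIV. B$j$g *\<^sub>R h (x t $ j)))))
            (Rm i *v w i t)) (at t within {0..})"
    and \<zeta>_ode: "\<forall>g t. t \<ge> 0 \<longrightarrow>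
        ((\<lambda>\<tau>. \<zeta> \<tau> $ g) has_vector_derivative
          stack_s blk sl (\<zeta> t $ g)
            + transpose (H_row Bp Rm blk g) *v (\<Sum>j\<in>UNIV. B$j$g *\<^sub>R h (x t $ j)))
          (at t within {0..})"
    and \<kappa>_ode: "\<forall>g t. t \<ge> 0 \<longrightarrow>
        ((\<lambda>\<tau>. \<kappa> \<tau> $ g) has_real_derivative
          \<delta> g * ((\<Sum>j\<in>UNIV. B$j$g *\<^sub>R h (x t $ j)) \<bullet> (\<Sum>j\<in>UNIV. B$j$g *\<^sub>R h (x t $ j))))
          (at t within {0..})"
    and bdd: "bounded ((\<lambda>t. (x t, \<zeta> t, \<kappa> t)) ` {0..})"
  shows "\<forall>i. ((\<lambda>t. norm (h (x t $ i) - (1 / real CARD('v)) *\<^sub>R (\<Sum>j\<in>UNIV. h (x t $ j)))) \<longlongrightarrow> 0) at_top"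
proof -
  obtain Dh :: "real^'n \<Rightarrow> real^'n^'q" where Dh: "\<And>z. (h has_derivative (\<lambda>v. Dh z *v v)) (at z)"
    and Dh_cont: "continuous_on UNIV Dh" using h_C1 by blast
  have h_cont: "continuous_on UNIV h"
    using Dh has_derivative_continuous by (blast intro: continuous_at_imp_continuous_on)
  define W where "W t = (\<chi> i. w i t)" for t
  define \<rho> where "\<rho> X g = (\<Sum>j\<in>UNIV. B$j$g *\<^sub>R h (X $ j))" for X :: "real^'n^'v" and g
  define xdot where "xdot X Z K V j = f (X $ j)
      (- (\<Sum>g\<in>UNIV. B$j$g *\<^sub>R (H_row Bp Rm blk g *v Z $ g + K $ g *\<^sub>R \<rho> X g))) (Rm j *v V $ j)"
    for X Z K V j
  define \<rho>dot where "\<rho>dot X Z K V g = (\<Sum>j\<in>UNIV. B$j$g *\<^sub>R (Dh (X $ j) *v xdot X Z K V j))"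
    for X Z K V g
  have x_der: "((\<lambda>\<tau>. x \<tau> $ j) has_vector_derivative xdot (x t) (\<zeta> t) (\<kappa> t) (W t) j)
      (at t within {0..})" if "t \<ge> 0" for j t
    using x_ode that by (simp add: xdot_def \<rho>_def W_def)
  have hx_der: "((\<lambda>\<tau>. h (x \<tau> $ j)) has_vector_derivative Dh (x t $ j) *v xdot (x t) (\<zeta> t) (\<kappa> t) (W t) j)
      (at t within {0..})" if "t \<ge> 0" for j t
    using vector_derivative_diff_chain_within[OF x_der[OF that] has_derivative_at_withinI[OF Dh]]
    by (simp add: o_def)
  have \<rho>_der: "((\<lambda>t. \<rho> (x t) g) has_vector_derivative \<rho>dot (x t) (\<zeta> t) (\<kappa> t) (W t) g)
      (at t within {0..})" if "t \<ge> 0" for g t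
    unfolding \<rho>_def \<rho>dot_def by (auto intro!: derivative_eq_intros hx_der that)
  have state_bounded: "bounded ((\<lambda>t. ((x t, \<zeta> t, \<kappa> t), W t)) ` {0..})"
    using bounded_Times[OF bdd exosystem_state_bounded[OF s_zero s_mono w_block w_ode]]
    by (rule bounded_subset) (auto simp: W_def)
  have \<rho>dot_cont: "continuous_on UNIV
      (\<lambda>p. \<rho>dot (fst (fst p)) (fst (snd (fst p))) (snd (snd (fst p))) (snd p) g)" for g
    unfolding \<rho>dot_def xdot_def \<rho>_def
    by (intro continuous_intros continuous_on_compose2[OF Dh_cont] continuous_on_compose2[OF h_cont]
          continuous_on_compose_case_prod3[OF loc_lipschitz_imp_continuous_on[OF f_lip]]) simp_all
  have \<rho>dot_bounded: "bounded ((\<lambda>t. \<rho>dot (x t) (\<zeta> t) (\<kappa> t) (W t) g) ` {0..})" for g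
    using bounded_continuous_comp[OF \<rho>dot_cont[of g] state_bounded] by simp
  have \<rho>_lim: "((\<lambda>t. \<rho> (x t) g) \<longlongrightarrow> 0) at_top" for g
  proof (rule barbalat_bounded_derivative[OF _ _ _ \<rho>_der \<rho>dot_bounded])
    show "((\<lambda>t. \<kappa> t $ g) has_real_derivative \<delta> g * (norm (\<rho> (x t) g))\<^sup>2) (at t within {0..})"
      if "t \<ge> 0" for t
      using \<kappa>_ode that by (simp add: \<rho>_def power2_norm_eq_inner)
    show "bdd_above ((\<lambda>t. \<kappa> t $ g) ` {0..})"
      using bounded_component_cart[OF bounded_snd[OF bounded_snd[OF bdd]], of g]
      by (auto intro: bounded_imp_bdd_above simp: image_image)
  qed (use \<delta>_pos in auto)
  show ?thesis
    using consensus_if_relative_outputs_tendsto_zero[OF edges A_conn Bp_def[unfolded B_def],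
        where y = "\<lambda>t j. h (x t $ j)"] \<rho>_lim
    by (simp add: \<rho>_def B_def)
qed

end
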